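(* Let $\mathcal{E}=\langle\mathrm{Env},A,\Rightarrow\rangle$ be an environment LTS and $\mathcal{P}=\langle\mathrm{Pr},A,\to\rangle$ a process LTS such that $\mathcal{P}$ contains a universal process, contains $\mathcal{E}$ (i.e. $\mathrm{Env}\subseteq\mathrm{Pr}$ with the same transitions), and is closed under joins. Then for all environments $e,f\in\mathrm{Env}$ (not necessarily image-finite): (1) $e\le f \iff\ \le^{ji}_f\ \subseteq\ \le^{ji}_e$; (2) $e\le f \iff\ \ge^{ji}_f\ \subseteq\ \ge^{ji}_e$, where $\ge^{ji}_g$ is the converse of $\le^{ji}_g$; (3) $e\le f \iff\ \simeq^{ji}_f\ \subseteq\ \simeq^{ji}_e$.
   Context: A labeled transition system (LTS) is a triple $\langle \mathrm{St},A,\to\rangle$ with states, actions, and transitions $s\xrightarrow{a}t$. A process LTS $\mathcal{P}=\langle \mathrm{Pr},A,\to\rangle$ has states called processes; an environment LTS $\mathcal{E}=\langle\mathrm{Env},A,\Rightarrow\rangle$ has states called environments, transitions $e\xRightarrow{a}e'$. A simulation is a nonempty relation $S$ on states such that $s\,S\,t$ and $s\xrightarrow{a}s'$ imply some $t\xrightarrow{a}t'$ with $s'\,S\,t'$; $s\le t$ iff some simulation relates $s$ to $t$; a bisimulation is a relation $B$ with $B$ and its converse simulations, and $\sim$ is bisimilarity. A process $u\in\mathrm{Pr}$ is universal if for every $a\in A$ there is a transition $u\xrightarrow{a}u'$ with $u'\sim u$. $\mathcal{P}$ is closed under joins if for all $s_1,s_2\in\mathrm{Pr}$ there is $s_1\mathbin{\&}s_2\in\mathrm{Pr}$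 whose transitions are exactly $s_1\mathbin{\&}s_2\xrightarrow{a}s_1'\mathbin{\&}s_2'$ for $s_1\xrightarrow{a}s_1'$, $s_2\xrightarrow{a}s_2'$. The join LTS $\mathcal{P}\mathbin{\&}\mathcal{E}$ has states $p\mathbin{\&}e$ and transitions $p\mathbin{\&}e\xrightarrow{a}p'\mathbin{\&}e'$ iff $p\xrightarrow{a}p'$ and $e\xRightarrow{a}e'$. $p\le^{ji}_e q$ iff $p\mathbin{\&}e\le q\mathbin{\&}e$; $p\simeq^{ji}_e q$ iff $p\le^{ji}_e q$ and $q\le^{ji}_e p$. *)

theory Defs
  imports Main
begin

(* An LTS over state type 's and action type 'a is given by its transition
   relation T :: 's => 'a => 's => bool; the set of actions A is UNIV :: 'a set. *)

definition simulation :: "('s \<Rightarrow> 'a \<Rightarrow> 's \<Rightarrow> bool) \<Rightarrow> ('s \<times> 's) set \<Rightarrow> bool" where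
  "simulation T S \<longleftrightarrow> S \<noteq> {} \<and>
     (\<forall>s t a s'. (s, t) \<in> S \<longrightarrow> T s a s' \<longrightarrow> (\<exists>t'. T t a t' \<and> (s', t') \<in> S))"

definition sim_le :: "('s \<Rightarrow> 'a \<Rightarrow> 's \<Rightarrow> bool) \<Rightarrow> 's \<Rightarrow> 's \<Rightarrow> bool" where
  "sim_le T s t \<longleftrightarrow> (\<exists>S. simulation T S \<and> (s, t) \<in> S)"

definition bisimilar :: "('s \<Rightarrow> 'a \<Rightarrow> 's \<Rightarrow> bool) \<Rightarrow> 's \<Rightarrow> 's \<Rightarrow> bool" where
  "bisimilar T s t \<longleftrightarrow> (\<exists>B. simulation T B \<and> simulation T (B\<inverse>) \<and> (s, t) \<in> B)"

definition universal :: "('p \<Rightarrow> 'a \<Rightarrow> 'p \<Rightarrow> bool) \<Rightarrow> 'p \<Rightarrow> bool" where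
  "universal T u \<longleftrightarrow> (\<forall>a. \<exists>u'. T u a u' \<and> bisimilar T u' u)"

definition join_op :: "('p \<Rightarrow> 'a \<Rightarrow> 'p \<Rightarrow> bool) \<Rightarrow> ('p \<Rightarrow> 'p \<Rightarrow> 'p) \<Rightarrow> bool" where
  "join_op T jn \<longleftrightarrow> (\<forall>s1 s2 a t. T (jn s1 s2) a t \<longleftrightarrow>
      (\<exists>s1' s2'. T s1 a s1' \<and> T s2 a s2' \<and> t = jn s1' s2'))"

(* Environment LTS: states Env, a subset of the processes, with the same
   transitions as the process LTS (hence Env is closed under transitions). *)
definition env_trans :: "('p \<Rightarrow> 'a \<Rightarrow> 'p \<Rightarrow> bool) \<Rightarrow> 'p set \<Rightarrow> 'p \<Rightarrow> 'a \<Rightarrow> 'p \<Rightarrow> bool" where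
  "env_trans T Env e a e' \<longleftrightarrow> e \<in> Env \<and> e' \<in> Env \<and> T e a e'"

(* The join LTS P & E: states are formal pairs (p, e) *)
definition join_lts :: "('p \<Rightarrow> 'a \<Rightarrow> 'p \<Rightarrow> bool) \<Rightarrow> 'p set \<Rightarrow> ('p \<times> 'p) \<Rightarrow> 'a \<Rightarrow> ('p \<times> 'p) \<Rightarrow> bool" where
  "join_lts T Env pe a pe' \<longleftrightarrow> T (fst pe) a (fst pe') \<and> env_trans T Env (snd pe) a (snd pe')"

definition ji_le :: "('p \<Rightarrow> 'a \<Rightarrow> 'p \<Rightarrow> bool) \<Rightarrow> 'p set \<Rightarrow> 'p \<Rightarrow> ('p \<times> 'p) set" where
  "ji_le T Env e = {(p, q). sim_le (join_lts T Env) (p, e) (q, e)}"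

definition ji_eq :: "('p \<Rightarrow> 'a \<Rightarrow> 'p \<Rightarrow> bool) \<Rightarrow> 'p set \<Rightarrow> 'p \<Rightarrow> ('p \<times> 'p) set" where
  "ji_eq T Env e = ji_le T Env e \<inter> (ji_le T Env e)\<inverse>"

end

theory Submission
  imports Defs
begin

text \<open>Joining with an environment only restricts the moves of a process, so a larger
  environment (in the simulation preorder) lets more simulations through: if e is simulated by
  f, then every join-inclusion pair for f is one for e. For the converse, a universal process u
  is join-equivalent to f under f, because both u & f and f & f behave exactly like f. If u & e
  is still simulated by f & e, then f, read as a process, matches every move of u & e, that is,
  every move of e; as the process LTS keeps f inside Env, this yields a simulation of e by f.\<close>

lemma sim_leI:
  assumes "(s, t) \<in> R"
    and "\<And>s t a s'. (s, t) \<in> R \<Longrightarrow> T s a s' \<Longrightarrow> \<exists>t'. T t a t' \<and> (s', t') \<in> R"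
  shows "sim_le T s t"
  unfolding sim_le_def simulation_def using assms by blast

lemma sim_leD:
  assumes "sim_le T s t" "T s a s'"
  shows "\<exists>t'. T t a t' \<and> sim_le T s' t'"
  using assms unfolding sim_le_def simulation_def by blast

lemma sim_le_refl: "sim_le T s s"
  by (rule sim_leI[where R = Id]) auto

lemma sim_le_trans:
  assumes "sim_le T x y" "sim_le T y z"
  shows "sim_le T x z"
proof (rule sim_leI[where R = "{(x, z). \<exists>y. sim_le T x y \<and> sim_le T y z}"])
  show "(x, z) \<in> {(x, z). \<exists>y. sim_le T x y \<and> sim_le T y z}"
    using assms by blast
next
  fix s t a s'
  assume "(s, t) \<in> {(x, z). \<exists>y. sim_le T x y \<and> sim_le T y z}" "T s a s'"
  then obtain y where y: "sim_le T s y" "sim_le T y t" by blast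
  obtain y' where y': "T y a y'" "sim_le T s' y'"
    using sim_leD[OF y(1) \<open>T s a s'\<close>] by blast
  obtain t' where "T t a t'" "sim_le T y' t'"
    using sim_leD[OF y(2) y'(1)] by blast
  with y'(2) show "\<exists>t'. T t a t' \<and> (s', t') \<in> {(x, z). \<exists>y. sim_le T x y \<and> sim_le T y z}"
    by blast
qed

lemma bisimilar_imp_sim_le_converse:
  assumes "bisimilar T s t"
  shows "sim_le T t s"
proof -
  obtain B where "simulation T (B\<inverse>)" "(s, t) \<in> B"
    using assms unfolding bisimilar_def by blast
  then show ?thesis
    unfolding sim_le_def by blast
qed

lemma universal_step:
  assumes "universal T u"
  obtains u' where "T u a u'" "sim_le T u u'"
proof -
  obtain u' where "T u a u'" "bisimilar T u' u"
    using assms unfolding universal_def by meson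
  then show ?thesis
    by (intro that bisimilar_imp_sim_le_converse)
qed

lemma universal_sim_le:
  assumes "universal T u"
  shows "sim_le T x u"
proof (rule sim_leI[where R = "{(x, v). sim_le T u v}"])
  show "(x, u) \<in> {(x, v). sim_le T u v}" by (simp add: sim_le_refl)
next
  fix s v a s'
  assume "(s, v) \<in> {(x, v). sim_le T u v}" "T s a s'"
  then have "sim_le T u v" by simp
  obtain u' where u': "T u a u'" "sim_le T u u'"
    using universal_step[OF assms] .
  obtain v' where "T v a v'" "sim_le T u' v'"
    using sim_leD[OF \<open>sim_le T u v\<close> u'(1)] by blast
  then show "\<exists>v'. T v a v' \<and> (s', v') \<in> {(x, v). sim_le T u v}"
    using sim_le_trans[OF u'(2)] by blast
qed

lemma join_lts_iff:
  "join_lts T Env (p, g) a (p', g') \<longleftrightarrow> T p a p' \<and> env_trans T Env g a g'"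
  by (simp add: join_lts_def)

lemma sim_le_join_lts_mono:
  assumes "sim_le T p q" "sim_le (env_trans T Env) g h"
  shows "sim_le (join_lts T Env) (p, g) (q, h)"
proof (rule sim_leI[where
      R = "{((p, g), (q, h)). sim_le T p q \<and> sim_le (env_trans T Env) g h}"])
  show "((p, g), (q, h)) \<in> {((p, g), (q, h)). sim_le T p q \<and> sim_le (env_trans T Env) g h}"
    using assms by simp
next
  fix s t a s'
  assume "(s, t) \<in> {((p, g), (q, h)). sim_le T p q \<and> sim_le (env_trans T Env) g h}"
    and "join_lts T Env s a s'"
  then obtain p g q h p' g' where eq: "s = (p, g)" "t = (q, h)" "s' = (p', g')"
    and le: "sim_le T p q" "sim_le (env_trans T Env) g h"
    and step: "T p a p'" "env_trans T Env g a g'"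
    by (cases s; cases t; cases s') (auto simp: join_lts_iff)
  obtain q' where "T q a q'" "sim_le T p' q'"
    using sim_leD[OF le(1) step(1)] by blast
  moreover obtain h' where "env_trans T Env h a h'" "sim_le (env_trans T Env) g' h'"
    using sim_leD[OF le(2) step(2)] by blast
  ultimately show "\<exists>t'. join_lts T Env t a t' \<and>
      (s', t') \<in> {((p, g), (q, h)). sim_le T p q \<and> sim_le (env_trans T Env) g h}"
    using eq by (intro exI[of _ "(q', h')"]) (simp add: join_lts_iff)
qed

text \<open>The environment on the right only has to follow the one on the left, since the left one
  already restricts the moves that need to be matched.\<close>

lemma sim_le_join_lts_replace_env:
  assumes "sim_le (join_lts T Env) (p, g) (q, h)" "sim_le (env_trans T Env) g g'"
  shows "sim_le (join_lts T Env) (p, g) (q, g')"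
proof (rule sim_leI[where R = "{((p, g), (q, g')). \<exists>h.
      sim_le (join_lts T Env) (p, g) (q, h) \<and> sim_le (env_trans T Env) g g'}"])
  show "((p, g), (q, g')) \<in> {((p, g), (q, g')). \<exists>h.
      sim_le (join_lts T Env) (p, g) (q, h) \<and> sim_le (env_trans T Env) g g'}"
    using assms by blast
next
  fix s t a s'
  assume "(s, t) \<in> {((p, g), (q, g')). \<exists>h.
      sim_le (join_lts T Env) (p, g) (q, h) \<and> sim_le (env_trans T Env) g g'}"
    and step: "join_lts T Env s a s'"
  then obtain p g q g' h p' g1 where eq: "s = (p, g)" "t = (q, g')" "s' = (p', g1)"
    and le: "sim_le (join_lts T Env) (p, g) (q, h)" "sim_le (env_trans T Env) g g'"
    by (cases s; cases t; cases s') auto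
  have "env_trans T Env g a g1"
    using step eq by (simp add: join_lts_iff)
  then obtain g1' where g1': "env_trans T Env g' a g1'" "sim_le (env_trans T Env) g1 g1'"
    using sim_leD[OF le(2)] by blast
  obtain q' h' where "join_lts T Env (q, h) a (q', h')" "sim_le (join_lts T Env) s' (q', h')"
    using sim_leD[OF le(1)] step eq by fastforce
  with g1' eq show "\<exists>t'. join_lts T Env t a t' \<and> (s', t') \<in> {((p, g), (q, g')). \<exists>h.
      sim_le (join_lts T Env) (p, g) (q, h) \<and> sim_le (env_trans T Env) g g'}"
    by (intro exI[of _ "(q', g1')"]) (auto simp: join_lts_iff)
qed

lemma sim_le_join_lts_diag:
  assumes "sim_le (env_trans T Env) g h"
  shows "sim_le (join_lts T Env) (p, g) (h, h)"
proof (rule sim_leI[where R = "{((p, g), (h, h')). h = h' \<and> sim_le (env_trans T Env) g h}"])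
  show "((p, g), (h, h)) \<in> {((p, g), (h, h')). h = h' \<and> sim_le (env_trans T Env) g h}"
    using assms by simp
next
  fix s t a s'
  assume "(s, t) \<in> {((p, g), (h, h')). h = h' \<and> sim_le (env_trans T Env) g h}"
    and step: "join_lts T Env s a s'"
  then obtain p g h p' g' where eq: "s = (p, g)" "t = (h, h)" "s' = (p', g')"
    and le: "sim_le (env_trans T Env) g h"
    by (cases s; cases t; cases s') auto
  have "env_trans T Env g a g'"
    using step eq by (simp add: join_lts_iff)
  then obtain h' where "env_trans T Env h a h'" "sim_le (env_trans T Env) g' h'"
    using sim_leD[OF le] by blast
  then show "\<exists>t'. join_lts T Env t a t' \<and>
      (s', t') \<in> {((p, g), (h, h')). h = h' \<and> sim_le (env_trans T Env) g h}"
    using eq by (intro exI[of _ "(h', h')"]) (auto simp: join_lts_iff env_trans_def)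
qed

lemma sim_le_env_if_sim_le_join_universal:
  assumes u: "universal T u"
    and env_closed: "\<And>x a y. x \<in> Env \<Longrightarrow> T x a y \<Longrightarrow> y \<in> Env"
    and le: "sim_le (join_lts T Env) (u, g) (h, g')"
    and h: "h \<in> Env"
  shows "sim_le (env_trans T Env) g h"
proof (rule sim_leI[where R = "{(g, h). h \<in> Env \<and> (\<exists>g'. sim_le (join_lts T Env) (u, g) (h, g'))}"])
  show "(g, h) \<in> {(g, h). h \<in> Env \<and> (\<exists>g'. sim_le (join_lts T Env) (u, g) (h, g'))}"
    using le h by blast
next
  fix x y a x1
  assume "(x, y) \<in> {(g, h). h \<in> Env \<and> (\<exists>g'. sim_le (join_lts T Env) (u, g) (h, g'))}"
    and step: "env_trans T Env x a x1"
  then obtain x' where y: "y \<in> Env" and le_xy: "sim_le (join_lts T Env) (u, x) (y, x')"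
    by blast
  obtain u' where u': "T u a u'" "sim_le T u u'"
    using universal_step[OF u] .
  then have "join_lts T Env (u, x) a (u', x1)"
    using step by (simp add: join_lts_iff)
  then obtain t where t: "join_lts T Env (y, x') a t" "sim_le (join_lts T Env) (u', x1) t"
    using sim_leD[OF le_xy] by blast
  obtain y1 x1' where t_eq: "t = (y1, x1')"
    by (cases t)
  have "T y a y1"
    using t(1) t_eq by (simp add: join_lts_iff)
  then have y1: "y1 \<in> Env" and "env_trans T Env y a y1"
    using y env_closed by (auto simp: env_trans_def)
  moreover have "sim_le (join_lts T Env) (u, x1) (y1, x1')"
    using sim_le_trans[OF sim_le_join_lts_mono[OF u'(2) sim_le_refl] t(2)] t_eq by simp
  ultimately show "\<exists>y'. env_trans T Env y a y' \<and>
      (x1, y') \<in> {(g, h). h \<in> Env \<and> (\<exists>g'. sim_le (join_lts T Env) (u, g) (h, g'))}"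
    by blast
qed

lemma ji_le_antimono:
  assumes "sim_le (env_trans T Env) e f"
  shows "ji_le T Env f \<subseteq> ji_le T Env e"
proof (clarsimp simp: ji_le_def)
  fix p q
  assume "sim_le (join_lts T Env) (p, f) (q, f)"
  then have "sim_le (join_lts T Env) (p, e) (q, f)"
    using sim_le_trans[OF sim_le_join_lts_mono[OF sim_le_refl assms]] by blast
  then show "sim_le (join_lts T Env) (p, e) (q, e)"
    using sim_le_join_lts_replace_env sim_le_refl by metis
qed

lemma universal_ji_eq_self:
  assumes "universal T u"
  shows "(u, f) \<in> ji_eq T Env f"
  using sim_le_join_lts_diag[OF sim_le_refl]
    sim_le_join_lts_mono[OF universal_sim_le[OF assms] sim_le_refl]
  unfolding ji_eq_def ji_le_def by simp

lemma ji_eq_antimono: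
  assumes "sim_le (env_trans T Env) e f"
  shows "ji_eq T Env f \<subseteq> ji_eq T Env e"
  using ji_le_antimono[OF assms] unfolding ji_eq_def by blast

theorem theorem3p14:
  fixes T :: "'p \<Rightarrow> 'a \<Rightarrow> 'p \<Rightarrow> bool" and Env :: "'p set"
    and jn :: "'p \<Rightarrow> 'p \<Rightarrow> 'p" and e f :: 'p
  assumes univ: "\<exists>u. universal T u"
    and env_closed: "\<And>x a y. x \<in> Env \<Longrightarrow> T x a y \<Longrightarrow> y \<in> Env"
    and joins: "join_op T jn"
    and e: "e \<in> Env" and f: "f \<in> Env"
  shows "(sim_le (env_trans T Env) e f \<longleftrightarrow> ji_le T Env f \<subseteq> ji_le T Env e)
       \<and> (sim_le (env_trans T Env) e f \<longleftrightarrow> (ji_le T Env f)\<inverse> \<subseteq> (ji_le T Env e)\<inverse>)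
       \<and> (sim_le (env_trans T Env) e f \<longleftrightarrow> ji_eq T Env f \<subseteq> ji_eq T Env e)"
proof -
  \<comment> \<open>The join LTS is formed on formal pairs.\<close>
  obtain u where u: "universal T u"
    using univ by blast
  have uf: "(u, f) \<in> ji_eq T Env f"
    using universal_ji_eq_self[OF u] .
  have sim_if_uf: "sim_le (env_trans T Env) e f" if "(u, f) \<in> ji_le T Env e"
    using sim_le_env_if_sim_le_join_universal[OF u env_closed _ f] that
    unfolding ji_le_def by simp
  have le_iff: "sim_le (env_trans T Env) e f \<longleftrightarrow> ji_le T Env f \<subseteq> ji_le T Env e"
  proof
    show "ji_le T Env f \<subseteq> ji_le T Env e" if "sim_le (env_trans T Env) e f"
      using ji_le_antimono[OF that] .
    show "sim_le (env_trans T Env) e f" if "ji_le T Env f \<subseteq> ji_le T Env e"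
      using sim_if_uf that uf unfolding ji_eq_def by blast
  qed
  moreover have "sim_le (env_trans T Env) e f \<longleftrightarrow> ji_eq T Env f \<subseteq> ji_eq T Env e"
  proof
    show "ji_eq T Env f \<subseteq> ji_eq T Env e" if "sim_le (env_trans T Env) e f"
      using ji_eq_antimono[OF that] .
    show "sim_le (env_trans T Env) e f" if "ji_eq T Env f \<subseteq> ji_eq T Env e"
      using sim_if_uf that uf unfolding ji_eq_def by blast
  qed
  ultimately show ?thesis
    by (simp only: converse_mono)
qed

end
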